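(* Let $(x_n)_n$ be a block sequence in the unit ball $B_J$ of $J$ such that $\lim_nI_\infty^*(x_n)=\alpha\ne0$ and $\lim_n\|x_n\|=\beta\ge0$, and let $0<\epsilon<1$. Then there is a subsequence $(x_{n_k})_k$ such that for every finitely supported sequence of reals $(\lambda_k)$, $(1-\epsilon)|\alpha|\,\big\|\sum_k\lambda_ke_k\big\|\le\big\|\sum_k\lambda_kx_{n_k}\big\|\le3(1+\epsilon)(|\alpha|+\beta)\big\|\sum_k\lambda_ke_k\big\|$. Hence $(x_{n_k})_k$ is equivalent to the unit vector basis $(e_k)$ of $J$.
   Context: The James space $J$ is the space of real sequences $x=(x(n))_{n\in\mathbb N}$ with $\|x\|=\sup\big(\sum_{i=1}^m|\sum_{k\in I_i}x(k)|^2\big)^{1/2}<\infty$, the supremum taken over all $m$ and all pairwise disjoint finite intervals $I_1,\dots,I_m$ of $\mathbb N$. The unit vectors $(e_n)$ form a basis of $J$; a block sequence is a sequence of nonzero finitely supported vectors with $\max\operatorname{supp}x_n<\min\operatorname{supp}x_{n+1}$. $I_\infty^*\in J^*$ is the functional $I_\infty^*(x)=\sum_{n=1}^\infty x(n)$. *)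

theory Defs
  imports "HOL-Analysis.Analysis"
begin

text \<open>Real sequences are functions nat => real (indices start at 0 instead of 1).\<close>

definition interval_family :: "nat set set \<Rightarrow> bool" where
  "interval_family F \<longleftrightarrow> finite F \<and> (\<forall>I\<in>F. \<exists>a b. a \<le> b \<and> I = {a..b}) \<and> disjoint F"

definition james_vals :: "(nat \<Rightarrow> real) \<Rightarrow> real set" where
  "james_vals x = {sqrt (\<Sum>I\<in>F. (\<Sum>k\<in>I. x k)\<^sup>2) | F. interval_family F}"

text \<open>The James norm (the supremum; meaningful when the set is bounded, e.g. finite support).\<close>
definition jnorm :: "(nat \<Rightarrow> real) \<Rightarrow> real" where
  "jnorm x = Sup (james_vals x)"

definition in_J :: "(nat \<Rightarrow> real) \<Rightarrow> bool" where
  "in_J x \<longleftrightarrow> bdd_above (james_vals x)"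

definition supp_seq :: "(nat \<Rightarrow> real) \<Rightarrow> nat set" where
  "supp_seq x = {n. x n \<noteq> 0}"

definition fin_supp :: "(nat \<Rightarrow> real) \<Rightarrow> bool" where
  "fin_supp x \<longleftrightarrow> finite (supp_seq x)"

definition block_seq :: "(nat \<Rightarrow> nat \<Rightarrow> real) \<Rightarrow> bool" where
  "block_seq x \<longleftrightarrow> (\<forall>n. x n \<noteq> (\<lambda>_. 0) \<and> fin_supp (x n)) \<and>
     (\<forall>n. Max (supp_seq (x n)) < Min (supp_seq (x (Suc n))))"

definition I_inf :: "(nat \<Rightarrow> real) \<Rightarrow> real" where
  "I_inf x = (\<Sum>n. x n)"

definition lin_comb :: "(nat \<Rightarrow> real) \<Rightarrow> (nat \<Rightarrow> nat \<Rightarrow> real) \<Rightarrow> nat \<Rightarrow> real" where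
  "lin_comb lam y = (\<lambda>i. \<Sum>k\<in>supp_seq lam. lam k * y k i)"

end

theory Submission
  imports Defs
begin

(* Pass to a subsequence y_k with |I(y_k) - alpha| <= eta / 2^(k+1) and ||y_k|| <= beta + eta,
   where eta = epsilon |alpha|. For z = sum_k lambda_k y_k and an interval I, the sum of z over I
   splits into alpha times the sum of lambda over the blocks lying inside I, the errors
   lambda_k (I(y_k) - alpha) over these blocks, and the contribution of the at most two blocks
   straddling an endpoint of I. Over a disjoint family of intervals the blocks lying inside form a
   disjoint family of index intervals, so the first part is at most |alpha| ||lambda||; the errors
   add up to at most eta ||lambda||; and Cauchy-Schwarz bounds the straddling part by
   2 (beta + eta) ||lambda||, because over a disjoint family of intervals the squared interval sums
   of a single y_k add up to at most ||y_k||^2. Conversely, a family of index intervals for lambda is carried to the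
   intervals spanned by the corresponding blocks, which no block straddles; this gives
   ||z|| >= (|alpha| - eta) ||lambda||. *)

section \<open>Interval families and the James norm\<close>

lemma L2_set_scale: "L2_set (\<lambda>i. a * f i) A = \<bar>a\<bar> * L2_set f A"
  unfolding L2_set_def power_mult_distrib
  by (simp add: real_sqrt_mult sum_nonneg flip: sum_distrib_left)

lemma L2_set_uminus: "L2_set (\<lambda>i. - f i) A = L2_set f A"
  unfolding L2_set_def by simp

lemma interval_family_empty: "interval_family {}"
  by (simp add: interval_family_def)

lemma interval_familyE:
  assumes "interval_family F" "I \<in> F"
  obtains p q where "p \<le> q" "I = {p..q}"
  using assms by (auto simp: interval_family_def)

lemma interval_family_finite: "interval_family F \<Longrightarrow> finite F"
  by (simp add: interval_family_def)

lemma interval_family_disjoint: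
  "interval_family F \<Longrightarrow> I \<in> F \<Longrightarrow> I' \<in> F \<Longrightarrow> I \<noteq> I' \<Longrightarrow> I \<inter> I' = {}"
  by (auto simp: interval_family_def pairwise_def disjnt_def)

lemma interval_family_member_finite: "interval_family F \<Longrightarrow> I \<in> F \<Longrightarrow> finite I"
  by (auto elim: interval_familyE)

lemma L2_set_interval_sums_le_jnorm:
  assumes "in_J x" "interval_family F"
  shows "L2_set (\<lambda>I. \<Sum>k\<in>I. x k) F \<le> jnorm x"
  unfolding jnorm_def
  by (rule cSup_upper) (use assms in \<open>auto simp: james_vals_def in_J_def L2_set_def\<close>)

lemma jnorm_nonneg: "in_J x \<Longrightarrow> 0 \<le> jnorm x"
  using L2_set_interval_sums_le_jnorm[OF _ interval_family_empty] by fastforce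

lemma jnorm_le:
  assumes "\<And>F. interval_family F \<Longrightarrow> L2_set (\<lambda>I. \<Sum>k\<in>I. x k) F \<le> B"
  shows "jnorm x \<le> B"
  unfolding jnorm_def
  by (rule cSup_least) (use assms interval_family_empty in \<open>auto simp: james_vals_def L2_set_def\<close>)

lemma fin_supp_imp_in_J:
  assumes "fin_supp x"
  shows "in_J x"
proof -
  let ?S = "supp_seq x"
  have "v \<le> (\<Sum>i\<in>?S. \<bar>x i\<bar>)" if "v \<in> james_vals x" for v
  proof -
    obtain F where v: "v = L2_set (\<lambda>I. \<Sum>k\<in>I. x k) F" and F: "interval_family F"
      using \<open>v \<in> james_vals x\<close> by (auto simp: james_vals_def L2_set_def)
    have fin: "finite F" "\<forall>I\<in>F. finite I"
      using F interval_family_finite interval_family_member_finite by blast+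
    have "v \<le> (\<Sum>I\<in>F. \<bar>\<Sum>k\<in>I. x k\<bar>)" unfolding v by (rule L2_set_le_sum_abs)
    also have "\<dots> \<le> (\<Sum>I\<in>F. \<Sum>k\<in>I. \<bar>x k\<bar>)" by (intro sum_mono sum_abs)
    also have "\<dots> = (\<Sum>k\<in>\<Union>F. \<bar>x k\<bar>)"
      using sum.Union_disjoint[of F "\<lambda>k. \<bar>x k\<bar>"] fin interval_family_disjoint[OF F] by simp
    also have "\<dots> \<le> (\<Sum>k\<in>\<Union>F \<union> ?S. \<bar>x k\<bar>)"
      by (rule sum_mono2) (use fin assms in \<open>auto simp: fin_supp_def\<close>)
    also have "\<dots> = (\<Sum>i\<in>?S. \<bar>x i\<bar>)"
      by (rule sum.mono_neutral_right) (use fin assms in \<open>auto simp: fin_supp_def supp_seq_def\<close>)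
    finally show ?thesis .
  qed
  then show ?thesis unfolding in_J_def bdd_above_def by blast
qed

lemma sum_squares_le_jnorm_squared:
  assumes "in_J x" "finite A"
  shows "(\<Sum>k\<in>A. (x k)\<^sup>2) \<le> (jnorm x)\<^sup>2"
proof -
  have F: "interval_family ((\<lambda>k. {k..k}) ` A)"
  proof -
    have "\<forall>I\<in>(\<lambda>k. {k..k}) ` A. \<exists>a b. a \<le> b \<and> I = {a..b}" by blast
    then show ?thesis
      using assms(2) by (auto simp: interval_family_def pairwise_def disjnt_def)
  qed
  have "inj_on (\<lambda>k. {k::nat}) A" by (auto simp: inj_on_def)
  then have "L2_set x A = L2_set (\<lambda>I. \<Sum>k\<in>I. x k) ((\<lambda>k. {k..k}) ` A)"
    unfolding L2_set_def by (simp add: sum.reindex)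
  also have "\<dots> \<le> jnorm x" using L2_set_interval_sums_le_jnorm[OF assms(1) F] .
  finally have "(L2_set x A)\<^sup>2 \<le> (jnorm x)\<^sup>2" by (simp add: power_mono)
  then show ?thesis by (simp add: L2_set_def sum_nonneg)
qed

lemma abs_le_jnorm:
  assumes "in_J x"
  shows "\<bar>x k\<bar> \<le> jnorm x"
proof -
  have "(x k)\<^sup>2 \<le> (jnorm x)\<^sup>2" using sum_squares_le_jnorm_squared[OF assms, of "{k}"] by simp
  then show ?thesis using jnorm_nonneg[OF assms] by (metis power2_abs power2_le_imp_le)
qed

lemma fin_supp_lin_comb:
  assumes "fin_supp lam" "\<And>k. fin_supp (y k)"
  shows "fin_supp (lin_comb lam y)"
proof -
  have "supp_seq (lin_comb lam y) \<subseteq> (\<Union>k\<in>supp_seq lam. supp_seq (y k))"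
  proof
    fix i assume "i \<in> supp_seq (lin_comb lam y)"
    then have "lin_comb lam y i \<noteq> 0" by (simp add: supp_seq_def)
    then have "(\<Sum>k\<in>supp_seq lam. lam k * y k i) \<noteq> 0" by (simp add: lin_comb_def)
    then obtain k where "k \<in> supp_seq lam" "lam k * y k i \<noteq> 0"
      by (meson sum.neutral)
    then show "i \<in> (\<Union>k\<in>supp_seq lam. supp_seq (y k))" by (auto simp: supp_seq_def)
  qed
  moreover have "finite (\<Union>k\<in>supp_seq lam. supp_seq (y k))"
    using assms by (simp add: fin_supp_def)
  ultimately show ?thesis unfolding fin_supp_def by (rule finite_subset)
qed

lemma sum_lin_comb:
  assumes "finite T" "supp_seq lam \<subseteq> T"
  shows "(\<Sum>i\<in>I. lin_comb lam y i) = (\<Sum>k\<in>T. lam k * (\<Sum>i\<in>I. y k i))"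
proof -
  have "(\<Sum>i\<in>I. lin_comb lam y i) = (\<Sum>k\<in>supp_seq lam. lam k * (\<Sum>i\<in>I. y k i))"
    unfolding lin_comb_def by (subst sum.swap) (simp add: sum_distrib_left)
  also have "\<dots> = (\<Sum>k\<in>T. lam k * (\<Sum>i\<in>I. y k i))"
    by (rule sum.mono_neutral_left) (use assms in \<open>auto simp: supp_seq_def\<close>)
  finally show ?thesis .
qed

section \<open>Successive blocks\<close>

locale block_supports =
  fixes y :: "nat \<Rightarrow> nat \<Rightarrow> real" and c d :: "nat \<Rightarrow> nat"
  assumes supported: "y k i \<noteq> 0 \<Longrightarrow> c k \<le> i \<and> i \<le> d k"
    and c_le_d: "c k \<le> d k"
    and d_less_c_Suc: "d k < c (Suc k)"
begin

lemma strict_mono_c: "strict_mono c"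
  unfolding strict_mono_Suc_iff using c_le_d d_less_c_Suc le_less_trans by blast

lemma strict_mono_d: "strict_mono d"
  unfolding strict_mono_Suc_iff using c_le_d d_less_c_Suc less_le_trans by blast

lemma d_less_c: "k < l \<Longrightarrow> d k < c l"
  using d_less_c_Suc[of k] strict_mono_less_eq[OF strict_mono_c, of "Suc k" l] by simp

lemma subseq:
  assumes "strict_mono r"
  shows "block_supports (\<lambda>k. y (r k)) (\<lambda>k. c (r k)) (\<lambda>k. d (r k))"
  by unfold_locales (use supported c_le_d d_less_c strict_monoD[OF assms] in auto)

lemma fin_supp_block: "fin_supp (y k)"
proof -
  have "supp_seq (y k) \<subseteq> {c k..d k}" using supported by (auto simp: supp_seq_def)
  then show ?thesis unfolding fin_supp_def by (rule finite_subset) simp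
qed

lemma sum_block_within:
  assumes "finite I" "{c k..d k} \<subseteq> I"
  shows "(\<Sum>i\<in>I. y k i) = I_inf (y k)"
proof -
  have "I_inf (y k) = (\<Sum>i\<in>{c k..d k}. y k i)"
    unfolding I_inf_def by (rule suminf_finite) (use supported in force)+
  also have "\<dots> = (\<Sum>i\<in>I. y k i)"
    by (rule sum.mono_neutral_left) (use assms supported in force)+
  finally show ?thesis by simp
qed

lemma sum_block_disjoint: "{c k..d k} \<inter> I = {} \<Longrightarrow> (\<Sum>i\<in>I. y k i) = 0"
  by (rule sum.neutral) (use supported in force)

definition blocks_within :: "nat set \<Rightarrow> nat set" where
  "blocks_within I = {k. {c k..d k} \<subseteq> I}"

definition blocks_straddling :: "nat set \<Rightarrow> nat set" where
  "blocks_straddling I = {k. \<not> {c k..d k} \<subseteq> I \<and> {c k..d k} \<inter> I \<noteq> {}}"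

definition block_span :: "nat set \<Rightarrow> nat set" where
  "block_span K = {c (Min K)..d (Max K)}"

lemma finite_blocks_meeting:
  assumes "finite I"
  shows "finite {k. {c k..d k} \<inter> I \<noteq> {}}"
proof (rule finite_subset)
  show "{k. {c k..d k} \<inter> I \<noteq> {}} \<subseteq> {..Max I}"
  proof
    fix k assume "k \<in> {k. {c k..d k} \<inter> I \<noteq> {}}"
    then obtain i where "i \<in> I" "c k \<le> i" by auto
    then show "k \<in> {..Max I}"
      using strict_mono_imp_increasing[OF strict_mono_c, of k] Max_ge[OF assms] by fastforce
  qed
qed simp

lemma finite_blocks_within: "finite I \<Longrightarrow> finite (blocks_within I)"
proof (rule finite_subset[OF _ finite_blocks_meeting])
  have "c k \<in> {c k..d k}" for k using c_le_d by simp
  then show "blocks_within I \<subseteq> {k. {c k..d k} \<inter> I \<noteq> {}}"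
    unfolding blocks_within_def by blast
qed

lemma finite_blocks_straddling: "finite I \<Longrightarrow> finite (blocks_straddling I)"
  by (rule finite_subset[OF _ finite_blocks_meeting]) (auto simp: blocks_straddling_def)

lemma blocks_within_disjoint: "I \<inter> I' = {} \<Longrightarrow> blocks_within I \<inter> blocks_within I' = {}"
  using c_le_d by (fastforce simp: blocks_within_def)

lemma blocks_within_atLeastAtMost: "blocks_within {p..q} = {k. p \<le> c k \<and> d k \<le> q}"
  using c_le_d by (auto simp: blocks_within_def)

lemma blocks_within_interval:
  assumes "blocks_within {p..q} \<noteq> {}"
  shows "blocks_within {p..q} = {Min (blocks_within {p..q})..Max (blocks_within {p..q})}"
    (is "?K = {?a..?b}")
proof
  have fin: "finite ?K" by (simp add: finite_blocks_within)
  then show "?K \<subseteq> {?a..?b}" by auto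
  have "?a \<in> ?K" "?b \<in> ?K" using fin assms by auto
  then have ends: "p \<le> c ?a" "d ?b \<le> q" by (auto simp: blocks_within_atLeastAtMost)
  show "{?a..?b} \<subseteq> ?K"
  proof
    fix k assume "k \<in> {?a..?b}"
    then have "c ?a \<le> c k" "d k \<le> d ?b"
      using strict_mono_less_eq[OF strict_mono_c] strict_mono_less_eq[OF strict_mono_d] by auto
    with ends show "k \<in> ?K" by (simp add: blocks_within_atLeastAtMost)
  qed
qed

lemma card_blocks_containing: "card {k. i \<in> {c k..d k}} \<le> 1"
proof -
  have "finite {k. i \<in> {c k..d k}}"
    by (rule finite_subset[OF _ finite_blocks_meeting[of "{i}"]]) auto
  moreover have "k = l" if "i \<in> {c k..d k}" "i \<in> {c l..d l}" for k l
    using that d_less_c[of k l] d_less_c[of l k] by (cases k l rule: linorder_cases) auto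
  ultimately show ?thesis by (auto simp: card_le_Suc0_iff_eq)
qed

lemma card_blocks_straddling: "card (blocks_straddling {p..q}) \<le> 2"
proof -
  let ?P = "{k. p \<in> {c k..d k}}" and ?Q = "{k. q \<in> {c k..d k}}"
  have "finite ?P" "finite ?Q"
    by (rule finite_subset[OF _ finite_blocks_meeting], auto)+
  moreover have "blocks_straddling {p..q} \<subseteq> ?P \<union> ?Q"
    by (auto simp: blocks_straddling_def)
  ultimately have "card (blocks_straddling {p..q}) \<le> card (?P \<union> ?Q)"
    by (intro card_mono) auto
  also have "\<dots> \<le> card ?P + card ?Q" by (rule card_Un_le)
  finally have "card (blocks_straddling {p..q}) \<le> card ?P + card ?Q" .
  then show ?thesis using card_blocks_containing[of p] card_blocks_containing[of q] by linarith
qed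

lemma interval_sum_lin_comb:
  assumes "fin_supp lam" "finite I"
  shows "(\<Sum>i\<in>I. lin_comb lam y i) =
    (\<Sum>k\<in>blocks_within I. lam k * I_inf (y k)) +
    (\<Sum>k\<in>blocks_straddling I. lam k * (\<Sum>i\<in>I. y k i))"
proof -
  let ?W = "blocks_within I" and ?S = "blocks_straddling I"
  have fin: "finite (supp_seq lam)" "finite ?W" "finite ?S"
    using assms finite_blocks_within finite_blocks_straddling by (auto simp: fin_supp_def)
  have "(\<Sum>i\<in>I. lin_comb lam y i) = (\<Sum>k\<in>supp_seq lam \<union> (?W \<union> ?S). lam k * (\<Sum>i\<in>I. y k i))"
    by (rule sum_lin_comb) (use fin in auto)
  also have "\<dots> = (\<Sum>k\<in>?W \<union> ?S. lam k * (\<Sum>i\<in>I. y k i))"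
    by (rule sum.mono_neutral_right)
      (use fin sum_block_disjoint in \<open>auto simp: blocks_within_def blocks_straddling_def\<close>)
  also have "\<dots> = (\<Sum>k\<in>?W. lam k * (\<Sum>i\<in>I. y k i)) + (\<Sum>k\<in>?S. lam k * (\<Sum>i\<in>I. y k i))"
    by (rule sum.union_disjoint) (use fin in \<open>auto simp: blocks_within_def blocks_straddling_def\<close>)
  also have "(\<Sum>k\<in>?W. lam k * (\<Sum>i\<in>I. y k i)) = (\<Sum>k\<in>?W. lam k * I_inf (y k))"
    by (rule sum.cong) (simp_all add: blocks_within_def sum_block_within assms(2))
  finally show ?thesis .
qed

lemma block_span_atLeastAtMost: "a \<le> b \<Longrightarrow> block_span {a..b} = {c a..d b}"
proof -
  assume "a \<le> b"
  then have "Min {a..b} = a" "Max {a..b} = b" by (auto intro: Min_eqI Max_eqI)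
  then show ?thesis by (simp add: block_span_def)
qed

lemma blocks_within_block_span:
  assumes "interval_family G" "K \<in> G"
  shows "blocks_within (block_span K) = K"
proof -
  obtain a b where ab: "a \<le> b" "K = {a..b}" using assms by (rule interval_familyE)
  then have "block_span K = {c a..d b}" by (simp add: block_span_atLeastAtMost)
  then show ?thesis
    using ab strict_mono_less_eq[OF strict_mono_c] strict_mono_less_eq[OF strict_mono_d]
    by (auto simp: blocks_within_atLeastAtMost)
qed

lemma blocks_straddling_block_span: "blocks_straddling (block_span K) = {}"
proof -
  have "{c k..d k} \<subseteq> {c a..d b} \<or> {c k..d k} \<inter> {c a..d b} = {}" for k a b
  proof (cases "k < a \<or> b < k")
    case True
    then show ?thesis using d_less_c[of k a] d_less_c[of b k] by auto
  next
    case False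
    then show ?thesis
      using strict_mono_less_eq[OF strict_mono_c, of a k] strict_mono_less_eq[OF strict_mono_d, of k b]
      by auto
  qed
  then show ?thesis by (auto simp: blocks_straddling_def block_span_def)
qed

lemma interval_family_block_span:
  assumes G: "interval_family G"
  shows "interval_family (block_span ` G)"
proof -
  have intervals: "\<exists>p q. p \<le> q \<and> block_span K = {p..q}" if K: "K \<in> G" for K
  proof -
    obtain a b where "a \<le> b" "K = {a..b}" using G K by (rule interval_familyE)
    moreover have "c a \<le> d b"
      using c_le_d[of a] strict_mono_less_eq[OF strict_mono_d, of a b] \<open>a \<le> b\<close> by simp
    ultimately show ?thesis by (auto simp: block_span_atLeastAtMost)
  qed
  have disj: "block_span K \<inter> block_span K' = {}" if "K \<in> G" "K' \<in> G" "K \<noteq> K'" for K K'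
  proof -
    obtain a b where ab: "a \<le> b" "K = {a..b}" using G \<open>K \<in> G\<close> by (rule interval_familyE)
    obtain a' b' where ab': "a' \<le> b'" "K' = {a'..b'}" using G \<open>K' \<in> G\<close> by (rule interval_familyE)
    have "K \<inter> K' = {}" using interval_family_disjoint[OF G that] .
    then have "b < a' \<or> b' < a"
    proof (rule contrapos_pp)
      assume "\<not> (b < a' \<or> b' < a)"
      then have "max a a' \<in> K \<inter> K'" using ab ab' by (auto simp: max_def)
      then show "K \<inter> K' \<noteq> {}" by blast
    qed
    then have "d b < c a' \<or> d b' < c a" using d_less_c[of b a'] d_less_c[of b' a] by blast
    then show ?thesis
      unfolding ab(2) ab'(2) block_span_atLeastAtMost[OF ab(1)] block_span_atLeastAtMost[OF ab'(1)]
      by auto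
  qed
  show ?thesis
    unfolding interval_family_def
  proof (intro conjI)
    show "finite (block_span ` G)" using interval_family_finite[OF G] by simp
    show "\<forall>I\<in>block_span ` G. \<exists>p q. p \<le> q \<and> I = {p..q}" using intervals by blast
    show "disjoint (block_span ` G)" by (rule pairwise_imageI) (simp add: disjnt_def disj)
  qed
qed

end

section \<open>Norm estimates for linear combinations of blocks\<close>

lemma sum_half_powers_le_1: "finite K \<Longrightarrow> (\<Sum>k\<in>K. (1/2::real) ^ Suc k) \<le> 1"
  using sum_le_suminf[OF sums_summable[OF power_half_series]] sums_unique[OF power_half_series]
  by fastforce

context block_supports
begin

lemma L2_sums_blocks_within_le_jnorm:
  assumes lam: "in_J lam" and F: "interval_family F"
  shows "L2_set (\<lambda>I. \<Sum>k\<in>blocks_within I. lam k) F \<le> jnorm lam"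
proof -
  let ?F' = "{I\<in>F. blocks_within I \<noteq> {}}"
  have disj: "blocks_within I \<inter> blocks_within I' = {}" if "I \<in> F" "I' \<in> F" "I \<noteq> I'" for I I'
    using blocks_within_disjoint interval_family_disjoint[OF F that] by blast
  have inj: "inj_on blocks_within ?F'"
    by (rule inj_onI) (use disj in blast)
  have family: "interval_family (blocks_within ` ?F')"
    unfolding interval_family_def
  proof (intro conjI)
    show "finite (blocks_within ` ?F')" using interval_family_finite[OF F] by simp
    show "\<forall>K\<in>blocks_within ` ?F'. \<exists>a b. a \<le> b \<and> K = {a..b}"
    proof
      fix K assume "K \<in> blocks_within ` ?F'"
      then obtain I where I: "I \<in> F" "K = blocks_within I" "K \<noteq> {}" by blast
      obtain p q where "I = {p..q}" using F I(1) by (rule interval_familyE)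
      then have "K = {Min K..Max K}" using I blocks_within_interval by simp
      moreover have "Min K \<le> Max K" using I finite_blocks_within
        by (simp add: \<open>I = {p..q}\<close>)
      ultimately show "\<exists>a b. a \<le> b \<and> K = {a..b}" by blast
    qed
    show "disjoint (blocks_within ` ?F')"
      by (rule pairwise_imageI) (use disj in \<open>auto simp: disjnt_def\<close>)
  qed
  have "L2_set (\<lambda>I. \<Sum>k\<in>blocks_within I. lam k) F = L2_set (\<lambda>I. \<Sum>k\<in>blocks_within I. lam k) ?F'"
    unfolding L2_set_def
    by (rule arg_cong[where f = sqrt], rule sum.mono_neutral_right)
      (use interval_family_finite[OF F] in auto)
  also have "\<dots> = L2_set (\<lambda>K. \<Sum>k\<in>K. lam k) (blocks_within ` ?F')"
    unfolding L2_set_def by (simp add: sum.reindex[OF inj])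
  also have "\<dots> \<le> jnorm lam" by (rule L2_set_interval_sums_le_jnorm[OF lam family])
  finally show ?thesis .
qed

lemma L2_weighted_sums_blocks_within_le:
  assumes lam: "in_J lam" and F: "interval_family F"
    and e: "\<And>k. \<bar>e k\<bar> \<le> \<eta> / 2 ^ Suc k"
  shows "L2_set (\<lambda>I. \<Sum>k\<in>blocks_within I. lam k * e k) F \<le> \<eta> * jnorm lam"
proof -
  let ?K = "\<Union>I\<in>F. blocks_within I"
  have finF: "finite F" using interval_family_finite[OF F] .
  have finK: "finite ?K"
    using finF finite_blocks_within interval_family_member_finite[OF F] by blast
  have "0 \<le> \<eta>" using order_trans[OF abs_ge_zero e[of 0]] by simp
  have "L2_set (\<lambda>I. \<Sum>k\<in>blocks_within I. lam k * e k) F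
      \<le> (\<Sum>I\<in>F. \<bar>\<Sum>k\<in>blocks_within I. lam k * e k\<bar>)"
    by (rule L2_set_le_sum_abs)
  also have "\<dots> \<le> (\<Sum>I\<in>F. \<Sum>k\<in>blocks_within I. \<bar>lam k\<bar> * \<bar>e k\<bar>)"
    by (intro sum_mono order_trans[OF sum_abs]) (simp add: abs_mult)
  also have "\<dots> = (\<Sum>k\<in>?K. \<bar>lam k\<bar> * \<bar>e k\<bar>)"
    by (rule sum.UNION_disjoint[symmetric])
      (use finF finite_blocks_within interval_family_member_finite[OF F]
         blocks_within_disjoint interval_family_disjoint[OF F] in auto)
  also have "\<dots> \<le> (\<Sum>k\<in>?K. jnorm lam * (\<eta> * (1/2) ^ Suc k))"
    by (intro sum_mono mult_mono)
      (use abs_le_jnorm[OF lam] e jnorm_nonneg[OF lam] in \<open>auto simp: power_one_over\<close>)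
  also have "\<dots> = jnorm lam * \<eta> * (\<Sum>k\<in>?K. (1/2) ^ Suc k)"
    by (simp add: sum_distrib_left mult.assoc)
  also have "\<dots> \<le> jnorm lam * \<eta>"
    using sum_half_powers_le_1[OF finK] jnorm_nonneg[OF lam] \<open>0 \<le> \<eta>\<close>
    by (simp add: mult_left_le)
  finally show ?thesis by (simp add: mult.commute)
qed

lemma L2_sums_blocks_straddling_le:
  assumes lam: "in_J lam" and F: "interval_family F" and norm_y: "\<And>k. jnorm (y k) \<le> B"
  shows "L2_set (\<lambda>I. \<Sum>k\<in>blocks_straddling I. lam k * (\<Sum>i\<in>I. y k i)) F \<le> 2 * B * jnorm lam"
proof -
  let ?s = "\<lambda>k I. \<Sum>i\<in>I. y k i" and ?K = "\<Union>I\<in>F. blocks_straddling I"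
  have finF: "finite F" using interval_family_finite[OF F] .
  have finK: "finite ?K"
    using finF finite_blocks_straddling interval_family_member_finite[OF F] by blast
  have y: "in_J (y k)" for k using fin_supp_block by (rule fin_supp_imp_in_J)
  have "0 \<le> B" using jnorm_nonneg[OF y] norm_y order_trans by blast
  have straddling_sq: "(\<Sum>k\<in>blocks_straddling I. lam k * ?s k I)\<^sup>2
      \<le> 2 * (\<Sum>k\<in>?K. (lam k)\<^sup>2 * (?s k I)\<^sup>2)" if "I \<in> F" for I
  proof -
    obtain p q where I: "I = {p..q}" using F \<open>I \<in> F\<close> by (rule interval_familyE)
    have "(\<Sum>k\<in>blocks_straddling I. lam k * ?s k I)\<^sup>2
        \<le> (\<Sum>k\<in>blocks_straddling I. (lam k * ?s k I)\<^sup>2) * card (blocks_straddling I)"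
      by (rule sum_squared_le_sum_of_squares)
    also have "\<dots> \<le> (\<Sum>k\<in>blocks_straddling I. (lam k * ?s k I)\<^sup>2) * 2"
      by (intro mult_left_mono sum_nonneg) (use card_blocks_straddling I in auto)
    also have "\<dots> \<le> (\<Sum>k\<in>?K. (lam k * ?s k I)\<^sup>2) * 2"
      by (intro mult_right_mono sum_mono2 finK) (use \<open>I \<in> F\<close> in auto)
    finally show ?thesis by (simp add: power_mult_distrib mult.commute)
  qed
  have interval_sums_sq: "(\<Sum>I\<in>F. (?s k I)\<^sup>2) \<le> B\<^sup>2" for k
  proof -
    have "L2_set (?s k) F \<le> B"
      using L2_set_interval_sums_le_jnorm[OF y F] norm_y order_trans by blast
    then have "(L2_set (?s k) F)\<^sup>2 \<le> B\<^sup>2" by (simp add: power_mono)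
    then show ?thesis by (simp add: L2_set_def sum_nonneg)
  qed
  have "(\<Sum>I\<in>F. (\<Sum>k\<in>blocks_straddling I. lam k * ?s k I)\<^sup>2)
      \<le> (\<Sum>I\<in>F. 2 * (\<Sum>k\<in>?K. (lam k)\<^sup>2 * (?s k I)\<^sup>2))"
    by (rule sum_mono) (rule straddling_sq)
  also have "\<dots> = 2 * (\<Sum>k\<in>?K. (lam k)\<^sup>2 * (\<Sum>I\<in>F. (?s k I)\<^sup>2))"
    by (simp add: sum_distrib_left sum.swap[of _ F])
  also have "\<dots> \<le> 2 * (\<Sum>k\<in>?K. (lam k)\<^sup>2 * B\<^sup>2)"
    by (intro mult_left_mono sum_mono) (simp_all add: interval_sums_sq)
  also have "\<dots> = 2 * B\<^sup>2 * (\<Sum>k\<in>?K. (lam k)\<^sup>2)"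
    by (simp add: sum_distrib_left algebra_simps)
  also have "\<dots> \<le> 2 * B\<^sup>2 * (jnorm lam)\<^sup>2"
    by (intro mult_left_mono sum_squares_le_jnorm_squared lam finK) simp
  also have "\<dots> \<le> (2 * B * jnorm lam)\<^sup>2" by (simp add: power_mult_distrib)
  finally show ?thesis
    unfolding L2_set_def using \<open>0 \<le> B\<close> jnorm_nonneg[OF lam] by (intro real_le_lsqrt) simp_all
qed

lemma jnorm_lin_comb_le:
  assumes lam: "fin_supp lam" and norm_y: "\<And>k. jnorm (y k) \<le> B"
    and I_inf_y: "\<And>k. \<bar>I_inf (y k) - \<alpha>\<bar> \<le> \<eta> / 2 ^ Suc k"
  shows "jnorm (lin_comb lam y) \<le> (\<bar>\<alpha>\<bar> + \<eta> + 2 * B) * jnorm lam"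
proof (rule jnorm_le)
  fix F assume F: "interval_family F"
  have "in_J lam" using lam by (rule fin_supp_imp_in_J)
  define A where "A I = (\<Sum>k\<in>blocks_within I. lam k)" for I
  define E where "E I = (\<Sum>k\<in>blocks_within I. lam k * (I_inf (y k) - \<alpha>))" for I
  define S where "S I = (\<Sum>k\<in>blocks_straddling I. lam k * (\<Sum>i\<in>I. y k i))" for I
  have "(\<Sum>i\<in>I. lin_comb lam y i) = \<alpha> * A I + E I + S I" if "I \<in> F" for I
    using interval_sum_lin_comb[OF lam interval_family_member_finite[OF F that]]
    by (simp add: A_def E_def S_def sum_distrib_left sum_subtractf algebra_simps)
  then have "L2_set (\<lambda>I. \<Sum>i\<in>I. lin_comb lam y i) F = L2_set (\<lambda>I. \<alpha> * A I + E I + S I) F"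
    by (rule L2_set_cong[OF refl])
  also have "\<dots> \<le> L2_set (\<lambda>I. \<alpha> * A I) F + L2_set E F + L2_set S F"
    using L2_set_triangle_ineq[of "\<lambda>I. \<alpha> * A I + E I" S F]
      L2_set_triangle_ineq[of "\<lambda>I. \<alpha> * A I" E F]
    by linarith
  also have "\<dots> \<le> \<bar>\<alpha>\<bar> * jnorm lam + \<eta> * jnorm lam + 2 * B * jnorm lam"
  proof -
    have "L2_set A F \<le> jnorm lam"
      unfolding A_def using \<open>in_J lam\<close> F by (rule L2_sums_blocks_within_le_jnorm)
    moreover have "L2_set E F \<le> \<eta> * jnorm lam"
      unfolding E_def using \<open>in_J lam\<close> F I_inf_y by (rule L2_weighted_sums_blocks_within_le)
    moreover have "L2_set S F \<le> 2 * B * jnorm lam"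
      unfolding S_def using \<open>in_J lam\<close> F norm_y by (rule L2_sums_blocks_straddling_le)
    ultimately show ?thesis by (simp add: L2_set_scale mult_left_mono add_mono)
  qed
  finally show "L2_set (\<lambda>I. \<Sum>i\<in>I. lin_comb lam y i) F \<le> (\<bar>\<alpha>\<bar> + \<eta> + 2 * B) * jnorm lam"
    by (simp add: algebra_simps)
qed

lemma jnorm_lin_comb_ge:
  assumes lam: "fin_supp lam" and I_inf_y: "\<And>k. \<bar>I_inf (y k) - \<alpha>\<bar> \<le> \<eta> / 2 ^ Suc k"
  shows "(\<bar>\<alpha>\<bar> - \<eta>) * jnorm lam \<le> jnorm (lin_comb lam y)"
proof -
  have "in_J lam" using lam by (rule fin_supp_imp_in_J)
  have "in_J (lin_comb lam y)" using fin_supp_lin_comb[OF lam fin_supp_block] by (rule fin_supp_imp_in_J)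
  have "0 \<le> \<eta>" using order_trans[OF abs_ge_zero I_inf_y[of 0]] by simp
  have main: "\<bar>\<alpha>\<bar> * L2_set (\<lambda>K. \<Sum>k\<in>K. lam k) G \<le> jnorm (lin_comb lam y) + \<eta> * jnorm lam"
    if G: "interval_family G" for G
  proof -
    let ?F = "block_span ` G"
    define A where "A I = (\<Sum>k\<in>blocks_within I. lam k)" for I
    define E where "E I = (\<Sum>k\<in>blocks_within I. lam k * (I_inf (y k) - \<alpha>))" for I
    have F: "interval_family ?F" using G by (rule interval_family_block_span)
    have "inj_on block_span G"
      by (rule inj_on_inverseI[where g = blocks_within]) (rule blocks_within_block_span[OF G])
    then have sums: "L2_set (\<lambda>K. \<Sum>k\<in>K. lam k) G = L2_set A ?F"
      unfolding L2_set_def A_def by (simp add: sum.reindex blocks_within_block_span[OF G])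
    have split: "\<alpha> * A I = (\<Sum>i\<in>I. lin_comb lam y i) + - E I" if "I \<in> ?F" for I
    proof -
      have "blocks_straddling I = {}" using that blocks_straddling_block_span by blast
      then show ?thesis
        using interval_sum_lin_comb[OF lam interval_family_member_finite[OF F that]]
        by (simp add: A_def E_def sum_distrib_left sum_subtractf algebra_simps)
    qed
    have "\<bar>\<alpha>\<bar> * L2_set A ?F = L2_set (\<lambda>I. \<alpha> * A I) ?F" by (rule L2_set_scale[symmetric])
    also have "\<dots> = L2_set (\<lambda>I. (\<Sum>i\<in>I. lin_comb lam y i) + - E I) ?F"
      by (rule L2_set_cong[OF refl split])
    also have "\<dots> \<le> L2_set (\<lambda>I. \<Sum>i\<in>I. lin_comb lam y i) ?F + L2_set E ?F"
      using L2_set_triangle_ineq[of "\<lambda>I. \<Sum>i\<in>I. lin_comb lam y i" "\<lambda>I. - E I" ?F]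
      by (simp add: L2_set_uminus)
    also have "\<dots> \<le> jnorm (lin_comb lam y) + \<eta> * jnorm lam"
      using L2_set_interval_sums_le_jnorm[OF \<open>in_J (lin_comb lam y)\<close> F]
        L2_weighted_sums_blocks_within_le[OF \<open>in_J lam\<close> F I_inf_y]
      unfolding E_def by (rule add_mono)
    finally show ?thesis using sums by simp
  qed
  show ?thesis
  proof (cases "\<alpha> = 0")
    case True
    have "0 \<le> \<eta> * jnorm lam" using \<open>0 \<le> \<eta>\<close> jnorm_nonneg[OF \<open>in_J lam\<close>] by simp
    then show ?thesis using True jnorm_nonneg[OF \<open>in_J (lin_comb lam y)\<close>] by simp
  next
    case False
    have "jnorm lam \<le> (jnorm (lin_comb lam y) + \<eta> * jnorm lam) / \<bar>\<alpha>\<bar>"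
      by (rule jnorm_le) (use main False in \<open>simp add: pos_le_divide_eq mult.commute\<close>)
    then show ?thesis using False by (simp add: pos_le_divide_eq algebra_simps)
  qed
qed

end

section \<open>Choice of the subsequence\<close>

lemma block_seq_imp_block_supports:
  assumes "block_seq x"
  shows "block_supports x (\<lambda>n. Min (supp_seq (x n))) (\<lambda>n. Max (supp_seq (x n)))"
proof
  fix k i
  have fin: "finite (supp_seq (x k))" using assms by (simp add: block_seq_def fin_supp_def)
  have "x k \<noteq> (\<lambda>_. 0)" using assms by (simp add: block_seq_def)
  then have "supp_seq (x k) \<noteq> {}" by (simp add: supp_seq_def fun_eq_iff)
  then show "Min (supp_seq (x k)) \<le> Max (supp_seq (x k))" using fin by simp
  show "Min (supp_seq (x k)) \<le> i \<and> i \<le> Max (supp_seq (x k))" if "x k i \<noteq> 0"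
  proof -
    have "i \<in> supp_seq (x k)" using that by (simp add: supp_seq_def)
    then show ?thesis using fin by simp
  qed
  show "Max (supp_seq (x k)) < Min (supp_seq (x (Suc k)))"
    using assms by (simp add: block_seq_def)
qed

lemma eventually_subseq:
  assumes "\<And>k. eventually (P k) sequentially"
  obtains r :: "nat \<Rightarrow> nat" where "strict_mono r" "\<And>k. P k (r k)"
proof -
  have "\<exists>N. \<forall>n\<ge>N. P k n" for k using assms[of k] by (simp add: eventually_sequentially)
  then obtain N where N: "\<And>k n. N k \<le> n \<Longrightarrow> P k n" by metis
  define r where "r k = k + (\<Sum>j\<le>k. N j)" for k
  have "strict_mono r" unfolding strict_mono_Suc_iff r_def by simp
  moreover have "N k \<le> r k" for k
    using member_le_sum[of k "{..k}" N] by (simp add: r_def)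
  ultimately show ?thesis using that N by blast
qed

lemma subseq_close_to_limits:
  fixes f g :: "nat \<Rightarrow> real"
  assumes "f \<longlonglongrightarrow> a" "g \<longlonglongrightarrow> b" "0 < \<eta>"
  obtains r where "strict_mono r" "\<And>k. \<bar>f (r k) - a\<bar> \<le> \<eta> / 2 ^ Suc k" "\<And>k. g (r k) \<le> b + \<eta>"
proof -
  define P where "P k n \<longleftrightarrow> \<bar>f n - a\<bar> \<le> \<eta> / 2 ^ Suc k \<and> g n \<le> b + \<eta>" for k n
  have "eventually (P k) sequentially" for k
  proof -
    have "eventually (\<lambda>n. dist (f n) a < \<eta> / 2 ^ Suc k) sequentially"
      using tendstoD[OF assms(1)] assms(3) by simp
    moreover have "eventually (\<lambda>n. dist (g n) b < \<eta>) sequentially"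
      using tendstoD[OF assms(2,3)] .
    ultimately show ?thesis
      by eventually_elim (auto simp: P_def dist_real_def abs_less_iff abs_le_iff)
  qed
  then obtain r where "strict_mono r" "\<And>k. P k (r k)"
    using eventually_subseq[of P] by blast
  then show ?thesis using that unfolding P_def by blast
qed

theorem mainTheorem13:
  fixes x :: "nat \<Rightarrow> nat \<Rightarrow> real" and \<alpha> \<beta> \<epsilon> :: real
  assumes "block_seq x"
    and "\<And>n. in_J (x n) \<and> jnorm (x n) \<le> 1"
    and "(\<lambda>n. I_inf (x n)) \<longlonglongrightarrow> \<alpha>" and "\<alpha> \<noteq> 0"
    and "(\<lambda>n. jnorm (x n)) \<longlonglongrightarrow> \<beta>" and "\<beta> \<ge> 0"
    and "0 < \<epsilon>" and "\<epsilon> < 1"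
  shows "\<exists>r :: nat \<Rightarrow> nat. strict_mono r \<and>
    (\<forall>lam :: nat \<Rightarrow> real. fin_supp lam \<longrightarrow>
       (1 - \<epsilon>) * \<bar>\<alpha>\<bar> * jnorm lam \<le> jnorm (lin_comb lam (\<lambda>k. x (r k))) \<and>
       jnorm (lin_comb lam (\<lambda>k. x (r k))) \<le> 3 * (1 + \<epsilon>) * (\<bar>\<alpha>\<bar> + \<beta>) * jnorm lam)"
proof -
  define \<eta> where "\<eta> = \<epsilon> * \<bar>\<alpha>\<bar>"
  have "0 < \<eta>" using assms(4,7) by (simp add: \<eta>_def)
  obtain r where r: "strict_mono r"
    and I_inf_r: "\<And>k. \<bar>I_inf (x (r k)) - \<alpha>\<bar> \<le> \<eta> / 2 ^ Suc k"
    and norm_r: "\<And>k. jnorm (x (r k)) \<le> \<beta> + \<eta>"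
    using subseq_close_to_limits[OF assms(3,5) \<open>0 < \<eta>\<close>] by blast
  interpret block_supports x "\<lambda>n. Min (supp_seq (x n))" "\<lambda>n. Max (supp_seq (x n))"
    using assms(1) by (rule block_seq_imp_block_supports)
  interpret sub: block_supports "\<lambda>k. x (r k)" "\<lambda>k. Min (supp_seq (x (r k)))"
    "\<lambda>k. Max (supp_seq (x (r k)))"
    using r by (rule subseq)
  have "(1 - \<epsilon>) * \<bar>\<alpha>\<bar> * jnorm lam \<le> jnorm (lin_comb lam (\<lambda>k. x (r k))) \<and>
    jnorm (lin_comb lam (\<lambda>k. x (r k))) \<le> 3 * (1 + \<epsilon>) * (\<bar>\<alpha>\<bar> + \<beta>) * jnorm lam"
    if lam: "fin_supp lam" for lam
  proof
    have "(\<bar>\<alpha>\<bar> - \<eta>) * jnorm lam \<le> jnorm (lin_comb lam (\<lambda>k. x (r k)))"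
      using lam I_inf_r by (rule sub.jnorm_lin_comb_ge)
    then show "(1 - \<epsilon>) * \<bar>\<alpha>\<bar> * jnorm lam \<le> jnorm (lin_comb lam (\<lambda>k. x (r k)))"
      by (simp add: \<eta>_def algebra_simps)
    have "jnorm (lin_comb lam (\<lambda>k. x (r k))) \<le> (\<bar>\<alpha>\<bar> + \<eta> + 2 * (\<beta> + \<eta>)) * jnorm lam"
      using lam norm_r I_inf_r by (rule sub.jnorm_lin_comb_le)
    also have "\<dots> \<le> 3 * (1 + \<epsilon>) * (\<bar>\<alpha>\<bar> + \<beta>) * jnorm lam"
    proof (rule mult_right_mono)
      have "0 \<le> \<epsilon> * \<beta>" using assms(6,7) by simp
      then show "\<bar>\<alpha>\<bar> + \<eta> + 2 * (\<beta> + \<eta>) \<le> 3 * (1 + \<epsilon>) * (\<bar>\<alpha>\<bar> + \<beta>)"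
        using assms(6) by (simp add: \<eta>_def algebra_simps)
      show "0 \<le> jnorm lam" using lam by (intro jnorm_nonneg fin_supp_imp_in_J)
    qed
    finally show "jnorm (lin_comb lam (\<lambda>k. x (r k))) \<le> 3 * (1 + \<epsilon>) * (\<bar>\<alpha>\<bar> + \<beta>) * jnorm lam" .
  qed
  then show ?thesis using r by blast
qed

end
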